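(* Fix an $s \times t$ matrix $A$ and let $\tilde{A}$ be its folding, of dimensions $s' \times t'$. There exist polynomials $p_1,p_2$ (depending only on $A$) such that for every $\epsilon > 0$, with $n_0 = p_1(\epsilon^{-1})$ and $\delta = 1/p_2(\epsilon^{-1})$, for every $n \geq n_0$, every $n \times n$ matrix $M$ that contains $\epsilon n^{s'+t'}$ copies of $\tilde{A}$ also contains $\delta n^{s+t}$ copies of $A$.
   Context: Matrices are over a fixed finite alphabet, with ordered rows and columns. A submatrix is obtained by deleting rows and columns while preserving order; a copy of a matrix $B$ in $M$ is a submatrix of $M$ equal to $B$. The predecessor of a row is the row immediately preceding it. The folding $\tilde{A}$ of $A$ is the matrix obtained from $A$ by deleting every row of $A$ that is equal to its predecessor, and then deleting every column of the resulting matrix that is equal to its predecessor (in that matrix). *)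

theory Defs
  imports Main "HOL-Computational_Algebra.Polynomial"
begin

text \<open>A matrix over alphabet 'a is a function nat => nat => 'a, together with
explicit dimensions (rows, columns); only entries with row index < rows and
column index < cols are relevant. Rows and columns are indexed from 0.\<close>

definition enum :: "nat set \<Rightarrow> nat \<Rightarrow> nat" where
  "enum S i = sorted_list_of_set S ! i"

definition copies ::
  "(nat \<Rightarrow> nat \<Rightarrow> 'a) \<Rightarrow> nat \<Rightarrow> (nat \<Rightarrow> nat \<Rightarrow> 'a) \<Rightarrow> nat \<Rightarrow> nat \<Rightarrow> (nat set \<times> nat set) set" where
  "copies M n B s t = {(R, C). R \<subseteq> {..<n} \<and> card R = s \<and> C \<subseteq> {..<n} \<and> card C = t \<and>
       (\<forall>i<s. \<forall>j<t. M (enum R i) (enum C j) = B i j)}"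

definition num_copies ::
  "(nat \<Rightarrow> nat \<Rightarrow> 'a) \<Rightarrow> nat \<Rightarrow> (nat \<Rightarrow> nat \<Rightarrow> 'a) \<Rightarrow> nat \<Rightarrow> nat \<Rightarrow> nat" where
  "num_copies M n B s t = card (copies M n B s t)"

definition fold_rows :: "(nat \<Rightarrow> nat \<Rightarrow> 'a) \<Rightarrow> nat \<Rightarrow> nat \<Rightarrow> nat set" where
  "fold_rows A s t = {i. i < s \<and> (i = 0 \<or> (\<exists>j<t. A i j \<noteq> A (i - 1) j))}"

definition fold_cols :: "(nat \<Rightarrow> nat \<Rightarrow> 'a) \<Rightarrow> nat \<Rightarrow> nat \<Rightarrow> nat set" where
  "fold_cols A s t = {j. j < t \<and> (j = 0 \<or> (\<exists>i\<in>fold_rows A s t. A i j \<noteq> A i (j - 1)))}"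

definition fold_nrows :: "(nat \<Rightarrow> nat \<Rightarrow> 'a) \<Rightarrow> nat \<Rightarrow> nat \<Rightarrow> nat" where
  "fold_nrows A s t = card (fold_rows A s t)"

definition fold_ncols :: "(nat \<Rightarrow> nat \<Rightarrow> 'a) \<Rightarrow> nat \<Rightarrow> nat \<Rightarrow> nat" where
  "fold_ncols A s t = card (fold_cols A s t)"

definition folding :: "(nat \<Rightarrow> nat \<Rightarrow> 'a) \<Rightarrow> nat \<Rightarrow> nat \<Rightarrow> (nat \<Rightarrow> nat \<Rightarrow> 'a)" where
  "folding A s t = (\<lambda>i j. A (enum (fold_rows A s t) i) (enum (fold_cols A s t) j))"

end

theory Submission
  imports Defs "HOL-Analysis.Convex"
begin

text \<open>
  Duplicating a single row is the basic step.  Group the copies of the smaller matrix by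
  everything except the image of the row to be duplicated; two copies in the same group whose
  images of that row differ combine into a copy of the larger matrix.  By Cauchy--Schwarz the
  number of such pairs is at least the square of the number of copies divided by the number
  of groups, which is at most \<open>n ^ (s + t - 1)\<close>.  Hence density \<open>\<epsilon>\<close> of the smaller matrix
  forces density about \<open>\<epsilon>\<^sup>2 / 4\<close> of the larger one.  A matrix arises from its folding by
  finitely many duplications of rows and of columns, and composing these polynomial bounds
  gives the theorem.
\<close>

lemma card_squared_le_card_fibre_pairs:
  assumes "finite X"
  shows "card X ^ 2 \<le> card {(x, y) \<in> X \<times> X. f x = f y} * card (f ` X)"
proof -
  define d where "d y = card {x \<in> X. f x = y}" for y
  have card_X: "card X = (\<Sum>y\<in>f ` X. d y)"
    unfolding d_def card_eq_sum using sum.image_gen[OF assms, of "\<lambda>_. 1::nat" f] by simp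
  have "card {(x, y) \<in> X \<times> X. f x = f y} = card (SIGMA x:X. {y \<in> X. f y = f x})"
    by (rule arg_cong[where f = card]) auto
  also have "\<dots> = (\<Sum>x\<in>X. d (f x))"
    unfolding d_def using assms by (simp add: card_SigmaI)
  also have "\<dots> = (\<Sum>y\<in>f ` X. \<Sum>x\<in>{x \<in> X. f x = y}. d (f x))"
    by (rule sum.image_gen[OF assms])
  also have "\<dots> = (\<Sum>y\<in>f ` X. d y ^ 2)"
    unfolding d_def by (simp add: power2_eq_square)
  finally have card_pairs: "card {(x, y) \<in> X \<times> X. f x = f y} = (\<Sum>y\<in>f ` X. d y ^ 2)" .
  have "real (card X) ^ 2 \<le> (\<Sum>y\<in>f ` X. real (d y) ^ 2) * card (f ` X)"
    unfolding card_X of_nat_sum by (rule sum_squared_le_sum_of_squares)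
  then have "real (card X ^ 2) \<le> real ((\<Sum>y\<in>f ` X. d y ^ 2) * card (f ` X))"
    by simp
  then show ?thesis
    unfolding card_pairs of_nat_le_iff .
qed

lemma duplication_inequality:
  fixes x y m d :: real
  assumes square_le: "x\<^sup>2 \<le> (x + 2 * y) * m" and "0 < m" and "d * m \<le> x" and "2 \<le> d"
  shows "d\<^sup>2 / 4 * m \<le> y"
proof -
  have "2 * m \<le> d * m" using assms(4) \<open>0 < m\<close> by (intro mult_right_mono) auto
  then have "2 * m \<le> x" using assms(3) by linarith
  then have "x * (x / 2) \<le> x * (x - m)" using \<open>0 < m\<close> by (intro mult_left_mono) auto
  also have "\<dots> \<le> 2 * y * m" using square_le by (simp add: algebra_simps power2_eq_square)
  finally have "x\<^sup>2 \<le> 4 * y * m" by (simp add: power2_eq_square)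
  moreover have "(d * m)\<^sup>2 \<le> x\<^sup>2"
    using assms(3,4) \<open>0 < m\<close> by (intro power_mono) auto
  ultimately have "(d * m)\<^sup>2 \<le> 4 * y * m" by linarith
  then have "(d\<^sup>2 / 4 * m) * (4 * m) \<le> y * (4 * m)"
    by (simp add: algebra_simps power2_eq_square)
  then show ?thesis using \<open>0 < m\<close> by simp
qed

section \<open>Copies as pairs of increasing index lists\<close>

definition copy_lists ::
  "(nat \<Rightarrow> nat \<Rightarrow> 'a) \<Rightarrow> nat \<Rightarrow> (nat \<Rightarrow> nat \<Rightarrow> 'a) \<Rightarrow> nat \<Rightarrow> nat \<Rightarrow> (nat list \<times> nat list) set" where
  "copy_lists M n B a b = {(rs, cs). length rs = a \<and> length cs = b \<and>
     sorted_wrt (<) rs \<and> sorted_wrt (<) cs \<and> set rs \<subseteq> {..<n} \<and> set cs \<subseteq> {..<n} \<and>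
     (\<forall>i<a. \<forall>j<b. M (rs ! i) (cs ! j) = B i j)}"

abbreviation index_lists :: "nat \<Rightarrow> nat \<Rightarrow> nat list set" where
  "index_lists n a \<equiv> {xs. set xs \<subseteq> {..<n} \<and> length xs = a}"

lemma card_index_lists: "card (index_lists n a) = n ^ a"
  by (simp add: card_lists_length_eq)

lemma copy_lists_subset: "copy_lists M n B a b \<subseteq> index_lists n a \<times> index_lists n b"
  unfolding copy_lists_def by auto

lemma finite_copy_lists: "finite (copy_lists M n B a b)"
  by (rule finite_subset[OF copy_lists_subset]) (simp add: finite_lists_length_eq)

lemma num_copies_eq_card_copy_lists: "num_copies M n B a b = card (copy_lists M n B a b)"
proof -
  have "bij_betw (\<lambda>(R, C). (sorted_list_of_set R, sorted_list_of_set C))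
      (copies M n B a b) (copy_lists M n B a b)"
  proof (rule bij_betw_byWitness[where f' = "\<lambda>(rs, cs). (set rs, set cs)"])
    show "\<forall>x\<in>copies M n B a b. (\<lambda>(rs, cs). (set rs, set cs))
        ((\<lambda>(R, C). (sorted_list_of_set R, sorted_list_of_set C)) x) = x"
      unfolding copies_def using finite_subset by fastforce
    show "\<forall>y\<in>copy_lists M n B a b. (\<lambda>(R, C). (sorted_list_of_set R, sorted_list_of_set C))
        ((\<lambda>(rs, cs). (set rs, set cs)) y) = y"
      unfolding copy_lists_def
      by (auto simp: sorted_list_of_set.idem_if_sorted_distinct strict_sorted_iff)
    show "(\<lambda>(R, C). (sorted_list_of_set R, sorted_list_of_set C)) ` copies M n B a b
        \<subseteq> copy_lists M n B a b"
      unfolding copies_def copy_lists_def enum_def using finite_subset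
      by (force simp: strict_sorted_list_of_set)
    show "(\<lambda>(rs, cs). (set rs, set cs)) ` copy_lists M n B a b \<subseteq> copies M n B a b"
      unfolding copies_def copy_lists_def enum_def
      by (auto simp: sorted_list_of_set.idem_if_sorted_distinct strict_sorted_iff distinct_card)
  qed
  then show ?thesis unfolding num_copies_def by (rule bij_betw_same_card)
qed

lemma num_copies_le: "num_copies M n B a b \<le> n ^ (a + b)"
proof -
  have "card (copy_lists M n B a b) \<le> card (index_lists n a \<times> index_lists n b)"
    by (rule card_mono[OF _ copy_lists_subset]) (simp add: finite_lists_length_eq)
  then show ?thesis
    by (simp add: num_copies_eq_card_copy_lists card_cartesian_product card_index_lists power_add)
qed

lemma num_copies_transpose:
  "num_copies (\<lambda>i j. M j i) n (\<lambda>i j. B j i) b a = num_copies M n B a b"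
proof -
  have "copy_lists (\<lambda>i j. M j i) n (\<lambda>i j. B j i) b a = prod.swap ` copy_lists M n B a b"
    unfolding copy_lists_def by (auto simp: image_iff)
  then show ?thesis
    by (simp add: num_copies_eq_card_copy_lists card_image)
qed

lemma num_copies_cong:
  assumes "\<forall>i<a. \<forall>j<b. B i j = B' i j"
  shows "num_copies M n B a b = num_copies M n B' a b"
  using assms unfolding num_copies_def copies_def by simp

section \<open>Duplicating a row\<close>

definition delete_at :: "nat \<Rightarrow> (nat \<Rightarrow> 'b) \<Rightarrow> nat \<Rightarrow> 'b" where
  "delete_at k f i = f (if i < k then i else Suc i)"

definition delete_row_index :: "nat \<Rightarrow> nat list \<times> nat list \<Rightarrow> nat list \<times> nat list" where
  "delete_row_index k = (\<lambda>(rs, cs). (take k rs @ drop (Suc k) rs, cs))"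

definition forget_row :: "nat \<Rightarrow> nat list \<times> nat list \<Rightarrow> nat list \<times> nat list \<times> nat list" where
  "forget_row k = (\<lambda>(rs, cs). (take k rs, drop (Suc k) rs, cs))"

lemma copy_lists_duplicate_row:
  assumes x: "(u @ p # w, cs) \<in> copy_lists M n (delete_at (Suc k) A) a b"
    and y: "(u @ q # w, cs) \<in> copy_lists M n (delete_at (Suc k) A) a b"
    and "length u = k" and "p < q" and same_rows: "\<forall>j<b. A (Suc k) j = A k j"
  shows "(u @ p # q # w, cs) \<in> copy_lists M n A (Suc a) b"
proof -
  have "length (u @ p # w) = a"
    and x_entries: "\<forall>i<a. \<forall>j<b. M ((u @ p # w) ! i) (cs ! j) = delete_at (Suc k) A i j"
    and y_entries: "\<forall>j<b. M ((u @ q # w) ! k) (cs ! j) = delete_at (Suc k) A k j"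
    using x y \<open>length u = k\<close> unfolding copy_lists_def by auto
  then have "k < a" using \<open>length u = k\<close> by auto
  have entry: "M ((u @ p # q # w) ! i) (cs ! j) = A i j" if "i < Suc a" "j < b" for i j
  proof -
    consider "i \<le> k" | "i = Suc k" | "Suc k < i" by linarith
    then show ?thesis
    proof cases
      case 1
      then show ?thesis using x_entries[rule_format, of i j] that \<open>k < a\<close> \<open>length u = k\<close>
        by (cases "i = k") (auto simp: nth_append delete_at_def)
    next
      case 2
      then show ?thesis using y_entries same_rows that \<open>length u = k\<close>
        by (simp add: nth_append delete_at_def)
    next
      case 3
      then have "(u @ p # q # w) ! i = (u @ p # w) ! (i - 1)"
        using \<open>length u = k\<close> by (auto simp: nth_append nth_Cons')
      moreover have "\<not> i - 1 < Suc k" "Suc (i - 1) = i" using 3 by auto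
      ultimately show ?thesis using x_entries[rule_format, of "i - 1" j] that
        by (simp add: delete_at_def)
    qed
  qed
  show ?thesis
    using x y \<open>p < q\<close> entry unfolding copy_lists_def by (auto simp: sorted_wrt_append)
qed

lemma split_at_common_context:
  assumes "k < length xs" "k < length ys" "take k xs = take k ys"
    and "drop (Suc k) xs = drop (Suc k) ys"
  obtains u w where "xs = u @ xs ! k # w" "ys = u @ ys ! k # w" "length u = k"
proof (rule that[of "take k xs" "drop (Suc k) xs"])
  show "xs = take k xs @ xs ! k # drop (Suc k) xs"
    by (rule id_take_nth_drop[OF assms(1)])
  show "ys = take k xs @ ys ! k # drop (Suc k) xs"
    unfolding assms(3,4) by (rule id_take_nth_drop[OF assms(2)])
qed (use assms(1) in simp)

lemma forget_row_eq_split: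
  assumes "x \<in> copy_lists M n B a b" "y \<in> copy_lists M n B a b" "k < a"
    and "forget_row k x = forget_row k y"
  shows "\<exists>u p q w cs. x = (u @ p # w, cs) \<and> y = (u @ q # w, cs) \<and> length u = k"
proof -
  obtain rs cs rs' cs' where xy: "x = (rs, cs)" "y = (rs', cs')" by fastforce
  have "length rs = a" "length rs' = a" "cs' = cs"
    and "take k rs = take k rs'" "drop (Suc k) rs = drop (Suc k) rs'"
    using assms xy unfolding copy_lists_def forget_row_def by auto
  then obtain u w where "rs = u @ rs ! k # w" "rs' = u @ rs' ! k # w" "length u = k"
    using split_at_common_context[of k rs rs'] \<open>k < a\<close> by auto
  then show ?thesis using xy \<open>cs' = cs\<close> by blast
qed

lemma card_forget_row_image:
  assumes "k < a"
  shows "card (forget_row k ` copy_lists M n B a b) \<le> n ^ (a - 1 + b)"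
proof -
  have "forget_row k ` copy_lists M n B a b \<subseteq>
      index_lists n k \<times> index_lists n (a - 1 - k) \<times> index_lists n b"
  proof
    fix y assume "y \<in> forget_row k ` copy_lists M n B a b"
    then obtain rs cs where "(rs, cs) \<in> copy_lists M n B a b" "y = (take k rs, drop (Suc k) rs, cs)"
      unfolding forget_row_def by auto
    then show "y \<in> index_lists n k \<times> index_lists n (a - 1 - k) \<times> index_lists n b"
      using set_take_subset[of k rs] set_drop_subset[of "Suc k" rs] \<open>k < a\<close>
      unfolding copy_lists_def by auto
  qed
  then have "card (forget_row k ` copy_lists M n B a b) \<le>
      card (index_lists n k \<times> index_lists n (a - 1 - k) \<times> index_lists n b)"
    by (rule card_mono[rotated]) (simp add: finite_lists_length_eq)
  also have "\<dots> = n ^ (a - 1 + b)"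
    using \<open>k < a\<close> by (simp add: card_cartesian_product card_index_lists flip: power_add)
  finally show ?thesis .
qed

text \<open>
  Two copies of the smaller matrix that agree except on the image of row \<open>k\<close> are either
  equal or, in one of the two orders, the two halves of a copy of the larger matrix.
\<close>

lemma card_forget_row_pairs:
  fixes M :: "nat \<Rightarrow> nat \<Rightarrow> 'a" and n :: nat
  assumes "k < a" and same_rows: "\<forall>j<b. A (Suc k) j = A k j"
  defines "X \<equiv> copy_lists M n (delete_at (Suc k) A) a b"
    and "Y \<equiv> copy_lists M n A (Suc a) b"
  shows "card {(x, y) \<in> X \<times> X. forget_row k x = forget_row k y} \<le> card X + 2 * card Y"
proof -
  define merges where "merges = (\<lambda>z. (delete_row_index (Suc k) z, delete_row_index k z)) ` Y"
  have merge: "((u @ p # w, cs), (u @ q # w, cs)) \<in> merges"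
    if "(u @ p # w, cs) \<in> X" "(u @ q # w, cs) \<in> X" "length u = k" "p < q" for u p q w cs
  proof -
    have "(u @ p # q # w, cs) \<in> Y"
      using copy_lists_duplicate_row[OF _ _ _ _ same_rows] that unfolding X_def Y_def by blast
    then show ?thesis
      unfolding merges_def using \<open>length u = k\<close> by (force simp: delete_row_index_def)
  qed
  have cover: "{(x, y) \<in> X \<times> X. forget_row k x = forget_row k y} \<subseteq>
      (\<lambda>x. (x, x)) ` X \<union> merges \<union> prod.swap ` merges" (is "?P \<subseteq> ?cover")
  proof
    fix z assume "z \<in> ?P"
    then obtain u p q w cs where z: "z = ((u @ p # w, cs), (u @ q # w, cs))" "length u = k"
      using forget_row_eq_split[OF _ _ \<open>k < a\<close>] unfolding X_def by blast
    then have "(u @ p # w, cs) \<in> X" "(u @ q # w, cs) \<in> X"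
      using \<open>z \<in> ?P\<close> by auto
    then consider "p = q" | "p < q" | "q < p" by linarith
    then show "z \<in> ?cover"
    proof cases
      case 1
      then show ?thesis using \<open>(u @ p # w, cs) \<in> X\<close> z by auto
    next
      case 2
      then show ?thesis using merge \<open>(u @ p # w, cs) \<in> X\<close> \<open>(u @ q # w, cs) \<in> X\<close> z by blast
    next
      case 3
      then have "prod.swap z \<in> merges"
        using merge \<open>(u @ p # w, cs) \<in> X\<close> \<open>(u @ q # w, cs) \<in> X\<close> z by simp
      then have "prod.swap (prod.swap z) \<in> prod.swap ` merges" by (rule imageI)
      then show ?thesis by simp
    qed
  qed
  have "finite X" "finite merges"
    unfolding X_def merges_def Y_def by (simp_all add: finite_copy_lists)
  have "card ?P \<le> card ?cover"
    using cover by (rule card_mono[rotated]) (simp add: \<open>finite X\<close> \<open>finite merges\<close>)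
  also have "\<dots> \<le> card ((\<lambda>x. (x, x)) ` X) + card merges + card (prod.swap ` merges)"
    using card_Un_le[of "(\<lambda>x. (x, x)) ` X" merges]
      card_Un_le[of "(\<lambda>x. (x, x)) ` X \<union> merges" "prod.swap ` merges"] by linarith
  also have "\<dots> \<le> card X + 2 * card Y"
  proof -
    have "card merges \<le> card Y"
      unfolding merges_def by (rule card_image_le) (simp add: Y_def finite_copy_lists)
    moreover have "card (prod.swap ` merges) \<le> card merges"
      using \<open>finite merges\<close> by (rule card_image_le)
    moreover have "card ((\<lambda>x. (x, x)) ` X) \<le> card X"
      using \<open>finite X\<close> by (rule card_image_le)
    ultimately show ?thesis by linarith
  qed
  finally show ?thesis .
qed

lemma card_copy_lists_duplicate_row:
  assumes "k < a" and "\<forall>j<b. A (Suc k) j = A k j"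
  shows "card (copy_lists M n (delete_at (Suc k) A) a b) ^ 2 \<le>
    (card (copy_lists M n (delete_at (Suc k) A) a b) + 2 * card (copy_lists M n A (Suc a) b))
      * n ^ (a - 1 + b)"
  by (rule le_trans[OF card_squared_le_card_fibre_pairs[OF finite_copy_lists]
        mult_le_mono[OF card_forget_row_pairs[OF assms] card_forget_row_image[OF assms(1)]]])

section \<open>Polynomial supersaturation\<close>

definition supersaturates ::
  "(nat \<Rightarrow> nat \<Rightarrow> 'a) \<Rightarrow> nat \<Rightarrow> nat \<Rightarrow> (nat \<Rightarrow> nat \<Rightarrow> 'a) \<Rightarrow> nat \<Rightarrow> nat \<Rightarrow> bool" where
  "supersaturates B s' t' A s t \<longleftrightarrow> (\<exists>c K D. 0 < c \<and> c \<le> 1 \<and> 1 \<le> K \<and> 0 \<le> D \<and>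
     (\<forall>\<epsilon> n M. 0 < \<epsilon> \<longrightarrow> \<epsilon> \<le> 1 \<longrightarrow> D * (1 / \<epsilon>) ^ K \<le> real n \<longrightarrow>
        \<epsilon> * real n ^ (s' + t') \<le> real (num_copies M n B s' t') \<longrightarrow>
        c * \<epsilon> ^ K * real n ^ (s + t) \<le> real (num_copies M n A s t)))"

lemma supersaturatesI:
  fixes c :: real
  assumes "0 < c" "c \<le> 1" "1 \<le> K" "0 \<le> D"
    and "\<And>\<epsilon> n M. 0 < \<epsilon> \<Longrightarrow> \<epsilon> \<le> 1 \<Longrightarrow> D * (1 / \<epsilon>) ^ K \<le> real n \<Longrightarrow>
      \<epsilon> * real n ^ (s' + t') \<le> real (num_copies M n B s' t') \<Longrightarrow>
      c * \<epsilon> ^ K * real n ^ (s + t) \<le> real (num_copies M n A s t)"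
  shows "supersaturates B s' t' A s t"
  using assms unfolding supersaturates_def by blast

lemma supersaturatesE:
  assumes "supersaturates B s' t' A s t"
  obtains c K D where "0 < c" "c \<le> 1" "1 \<le> K" "0 \<le> D"
    and "\<And>\<epsilon> n M. 0 < \<epsilon> \<Longrightarrow> \<epsilon> \<le> 1 \<Longrightarrow> D * (1 / \<epsilon>) ^ K \<le> real n \<Longrightarrow>
      \<epsilon> * real n ^ (s' + t') \<le> real (num_copies M n B s' t') \<Longrightarrow>
      c * \<epsilon> ^ K * real n ^ (s + t) \<le> real (num_copies M n A s t)"
  using assms unfolding supersaturates_def by blast

lemma supersaturates_cong:
  assumes "\<forall>i<s. \<forall>j<t. A i j = B i j"
  shows "supersaturates B s t A s t"
  by (rule supersaturatesI[where c = 1 and K = 1 and D = 0]) (simp_all add: num_copies_cong[OF assms])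

lemma supersaturates_trans:
  assumes "supersaturates C s'' t'' B s' t'" and "supersaturates B s' t' A s t"
  shows "supersaturates C s'' t'' A s t"
proof -
  obtain c1 K1 D1 where c1: "0 < c1" "c1 \<le> 1" and "1 \<le> K1" "0 \<le> D1"
    and H1: "\<And>\<epsilon> n M. 0 < \<epsilon> \<Longrightarrow> \<epsilon> \<le> 1 \<Longrightarrow> D1 * (1 / \<epsilon>) ^ K1 \<le> real n \<Longrightarrow>
      \<epsilon> * real n ^ (s'' + t'') \<le> real (num_copies M n C s'' t'') \<Longrightarrow>
      c1 * \<epsilon> ^ K1 * real n ^ (s' + t') \<le> real (num_copies M n B s' t')"
    using assms(1) by (rule supersaturatesE) blast
  obtain c2 K2 D2 where c2: "0 < c2" "c2 \<le> 1" and "1 \<le> K2" "0 \<le> D2"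
    and H2: "\<And>\<epsilon> n M. 0 < \<epsilon> \<Longrightarrow> \<epsilon> \<le> 1 \<Longrightarrow> D2 * (1 / \<epsilon>) ^ K2 \<le> real n \<Longrightarrow>
      \<epsilon> * real n ^ (s' + t') \<le> real (num_copies M n B s' t') \<Longrightarrow>
      c2 * \<epsilon> ^ K2 * real n ^ (s + t) \<le> real (num_copies M n A s t)"
    using assms(2) by (rule supersaturatesE) blast
  show ?thesis
  proof (rule supersaturatesI[where c = "c2 * c1 ^ K2" and K = "K1 * K2" and D = "D1 + D2 / c1 ^ K2"])
    fix \<epsilon> :: real and n M
    assume "0 < \<epsilon>" "\<epsilon> \<le> 1" and n_large: "(D1 + D2 / c1 ^ K2) * (1 / \<epsilon>) ^ (K1 * K2) \<le> real n"
      and dense: "\<epsilon> * real n ^ (s'' + t'') \<le> real (num_copies M n C s'' t'')"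
    define e where "e = c1 * \<epsilon> ^ K1"
    have "0 < e" "e \<le> 1"
      using c1 \<open>0 < \<epsilon>\<close> \<open>\<epsilon> \<le> 1\<close> by (auto simp: e_def power_le_one mult_le_one)
    have "(1 / \<epsilon>) ^ K1 \<le> (1 / \<epsilon>) ^ (K1 * K2)"
      using \<open>1 \<le> K2\<close> \<open>0 < \<epsilon>\<close> \<open>\<epsilon> \<le> 1\<close> by (intro power_increasing) auto
    then have "D1 * (1 / \<epsilon>) ^ K1 \<le> D1 * (1 / \<epsilon>) ^ (K1 * K2)"
      using \<open>0 \<le> D1\<close> by (rule mult_left_mono)
    moreover have "D2 * (1 / e) ^ K2 = D2 / c1 ^ K2 * (1 / \<epsilon>) ^ (K1 * K2)"
      by (simp add: e_def power_mult power_mult_distrib power_one_over)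
    moreover have "0 \<le> D2 / c1 ^ K2 * (1 / \<epsilon>) ^ (K1 * K2)" "0 \<le> D1 * (1 / \<epsilon>) ^ (K1 * K2)"
      using \<open>0 \<le> D1\<close> \<open>0 \<le> D2\<close> c1 \<open>0 < \<epsilon>\<close> by simp_all
    ultimately have "D1 * (1 / \<epsilon>) ^ K1 \<le> real n" "D2 * (1 / e) ^ K2 \<le> real n"
      using n_large by (simp_all add: distrib_right)
    then have "e * real n ^ (s' + t') \<le> real (num_copies M n B s' t')"
      unfolding e_def using H1[OF \<open>0 < \<epsilon>\<close> \<open>\<epsilon> \<le> 1\<close> _ dense] by simp
    then have "c2 * e ^ K2 * real n ^ (s + t) \<le> real (num_copies M n A s t)"
      by (rule H2[OF \<open>0 < e\<close> \<open>e \<le> 1\<close> \<open>D2 * (1 / e) ^ K2 \<le> real n\<close>])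
    then show "c2 * c1 ^ K2 * \<epsilon> ^ (K1 * K2) * real n ^ (s + t) \<le> real (num_copies M n A s t)"
      by (simp add: e_def power_mult power_mult_distrib mult.assoc)
  qed (use c1 c2 \<open>1 \<le> K1\<close> \<open>1 \<le> K2\<close> \<open>0 \<le> D1\<close> \<open>0 \<le> D2\<close> in
      \<open>auto simp: power_le_one mult_le_one\<close>)
qed

lemma supersaturates_transpose:
  assumes "supersaturates B s' t' A s t"
  shows "supersaturates (\<lambda>i j. B j i) t' s' (\<lambda>i j. A j i) t s"
proof -
  obtain c K D where "0 < c" "c \<le> 1" "1 \<le> K" "0 \<le> D"
    and H: "\<And>\<epsilon> n M. 0 < \<epsilon> \<Longrightarrow> \<epsilon> \<le> 1 \<Longrightarrow> D * (1 / \<epsilon>) ^ K \<le> real n \<Longrightarrow>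
      \<epsilon> * real n ^ (s' + t') \<le> real (num_copies M n B s' t') \<Longrightarrow>
      c * \<epsilon> ^ K * real n ^ (s + t) \<le> real (num_copies M n A s t)"
    using assms by (rule supersaturatesE) blast
  show ?thesis
  proof (rule supersaturatesI[where c = c and K = K and D = D])
    fix \<epsilon> :: real and n M
    assume bounds: "0 < \<epsilon>" "\<epsilon> \<le> 1" "D * (1 / \<epsilon>) ^ K \<le> real n"
      and dense: "\<epsilon> * real n ^ (t' + s') \<le> real (num_copies M n (\<lambda>i j. B j i) t' s')"
    have "\<epsilon> * real n ^ (s' + t') \<le> real (num_copies (\<lambda>i j. M j i) n B s' t')"
      using dense num_copies_transpose[of "\<lambda>i j. M j i" n B t' s'] by (simp add: add.commute)
    then have "c * \<epsilon> ^ K * real n ^ (s + t) \<le> real (num_copies (\<lambda>i j. M j i) n A s t)"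
      by (rule H[OF bounds])
    then show "c * \<epsilon> ^ K * real n ^ (t + s) \<le> real (num_copies M n (\<lambda>i j. A j i) t s)"
      using num_copies_transpose[of "\<lambda>i j. M j i" n A t s] by (simp add: add.commute)
  qed (use \<open>0 < c\<close> \<open>c \<le> 1\<close> \<open>1 \<le> K\<close> \<open>0 \<le> D\<close> in auto)
qed

lemma supersaturates_duplicate_row:
  assumes "k < a" and "\<forall>j<t. A (Suc k) j = A k j"
  shows "supersaturates (delete_at (Suc k) A) a t A (Suc a) t"
proof (rule supersaturatesI[where c = "1 / 4" and K = 2 and D = 2])
  fix \<epsilon> :: real and n M
  assume "0 < \<epsilon>" "\<epsilon> \<le> 1" and n_large: "2 * (1 / \<epsilon>) ^ 2 \<le> real n"
    and dense: "\<epsilon> * real n ^ (a + t) \<le> real (num_copies M n (delete_at (Suc k) A) a t)"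
  define m where "m = real n ^ (a - 1 + t)"
  have "1 / \<epsilon> \<le> (1 / \<epsilon>) ^ 2"
    using power_increasing[of 1 2 "1 / \<epsilon>"] \<open>0 < \<epsilon>\<close> \<open>\<epsilon> \<le> 1\<close> by simp
  then have "2 / \<epsilon> \<le> real n" using n_large by simp
  then have "2 \<le> \<epsilon> * real n" using \<open>0 < \<epsilon>\<close> by (simp add: field_simps)
  then have "0 < m" using \<open>0 < \<epsilon>\<close> by (auto simp: m_def zero_less_mult_iff)
  obtain a' where "a = Suc a'" using \<open>k < a\<close> by (cases a) auto
  then have powers: "real n ^ (a + t) = real n * m" "real n ^ (Suc a + t) = (real n)\<^sup>2 * m"
    by (simp_all add: m_def power2_eq_square)
  have square: "real (num_copies M n (delete_at (Suc k) A) a t) ^ 2 \<le>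
      (real (num_copies M n (delete_at (Suc k) A) a t) + 2 * real (num_copies M n A (Suc a) t)) * m"
    using card_copy_lists_duplicate_row[OF assms, of M n, THEN of_nat_mono[where 'a = real]]
    unfolding m_def by (simp add: num_copies_eq_card_copy_lists)
  have "(\<epsilon> * real n)\<^sup>2 / 4 * m \<le> real (num_copies M n A (Suc a) t)"
    by (rule duplication_inequality[OF square \<open>0 < m\<close> _ \<open>2 \<le> \<epsilon> * real n\<close>])
      (use dense powers(1) in \<open>simp add: mult.assoc\<close>)
  then show "1 / 4 * \<epsilon> ^ 2 * real n ^ (Suc a + t) \<le> real (num_copies M n A (Suc a) t)"
    unfolding powers(2) by (simp add: power_mult_distrib)
qed auto

section \<open>Repeating rows and columns\<close>

text \<open>\<open>A i = B (\<phi> i)\<close> with \<open>\<phi>\<close> stuttering says that \<open>A\<close> is \<open>B\<close> with some rows repeated.\<close>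

definition stuttering :: "(nat \<Rightarrow> nat) \<Rightarrow> nat \<Rightarrow> nat \<Rightarrow> bool" where
  "stuttering \<phi> s s' \<longleftrightarrow> (0 < s \<longrightarrow> \<phi> 0 = 0) \<and>
     (\<forall>i. Suc i < s \<longrightarrow> \<phi> (Suc i) = \<phi> i \<or> \<phi> (Suc i) = Suc (\<phi> i)) \<and>
     s' = (if s = 0 then 0 else Suc (\<phi> (s - 1)))"

lemma stuttering_delete_at:
  assumes "stuttering \<phi> (Suc s) s'" and "i < s" and "\<phi> (Suc i) = \<phi> i"
  shows "stuttering (delete_at (Suc i) \<phi>) s s'"
proof -
  have steps: "\<phi> (Suc r) = \<phi> r \<or> \<phi> (Suc r) = Suc (\<phi> r)" if "r < s" for r
    using assms(1) that unfolding stuttering_def by auto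
  have "delete_at (Suc i) \<phi> (Suc r) = delete_at (Suc i) \<phi> r \<or>
      delete_at (Suc i) \<phi> (Suc r) = Suc (delete_at (Suc i) \<phi> r)" if "Suc r < s" for r
    using steps[of r] steps[of "Suc r"] that assms(3)
    by (cases "r = i") (auto simp: delete_at_def)
  moreover have "delete_at (Suc i) \<phi> (s - 1) = \<phi> s"
    using assms(2,3) by (cases "s = Suc i") (auto simp: delete_at_def)
  ultimately show ?thesis
    using assms unfolding stuttering_def by (auto simp: delete_at_def)
qed

lemma stuttering_imp_identity:
  assumes "stuttering \<phi> s s'" and "\<forall>i. Suc i < s \<longrightarrow> \<phi> (Suc i) \<noteq> \<phi> i"
  shows "s' = s" and "\<forall>i<s. \<phi> i = i"
proof -
  show identity: "\<forall>i<s. \<phi> i = i"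
  proof (intro allI impI)
    fix i assume "i < s" then show "\<phi> i = i"
      using assms unfolding stuttering_def by (induction i) auto
  qed
  show "s' = s"
    using assms(1) identity unfolding stuttering_def by (cases s) auto
qed

lemma supersaturates_stuttering_rows:
  assumes "stuttering \<phi> s s'" and "\<forall>i<s. \<forall>j<t. A i j = B (\<phi> i) j"
  shows "supersaturates B s' t A s t"
  using assms
proof (induction s arbitrary: A \<phi>)
  case 0
  then show ?case using supersaturates_cong[of 0 t A B] by (simp add: stuttering_def)
next
  case (Suc s)
  show ?case
  proof (cases "\<exists>i. Suc i < Suc s \<and> \<phi> (Suc i) = \<phi> i")
    case False
    then have "\<forall>i. Suc i < Suc s \<longrightarrow> \<phi> (Suc i) \<noteq> \<phi> i" by blast
    note identity = stuttering_imp_identity[OF Suc.prems(1) this]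
    have "\<forall>i<Suc s. \<forall>j<t. A i j = B i j"
      using Suc.prems(2) identity(2) by simp
    then show ?thesis
      using supersaturates_cong identity(1) by simp
  next
    case True
    then obtain i where "i < s" and repeat: "\<phi> (Suc i) = \<phi> i" by auto
    have "supersaturates B s' t (delete_at (Suc i) A) s t"
      using Suc.prems(2)
      by (intro Suc.IH[OF stuttering_delete_at[OF Suc.prems(1) \<open>i < s\<close> repeat]])
        (simp add: delete_at_def)
    moreover have "supersaturates (delete_at (Suc i) A) s t A (Suc s) t"
      using Suc.prems(2) \<open>i < s\<close> repeat by (intro supersaturates_duplicate_row) auto
    ultimately show ?thesis by (rule supersaturates_trans)
  qed
qed

lemma supersaturates_stuttering_cols:
  assumes "stuttering \<gamma> t t'" and "\<forall>i<s. \<forall>j<t. A i j = B i (\<gamma> j)"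
  shows "supersaturates B s t' A s t"
proof -
  have "supersaturates (\<lambda>i j. B j i) t' s (\<lambda>i j. A j i) t s"
    using assms by (intro supersaturates_stuttering_rows) auto
  from supersaturates_transpose[OF this] show ?thesis by simp
qed

lemma enum_in: "finite R \<Longrightarrow> i < card R \<Longrightarrow> enum R i \<in> R"
  unfolding enum_def using nth_mem[of i "sorted_list_of_set R"] by simp

lemma enum_card_less:
  assumes "finite R" and "x \<in> R"
  shows "enum R (card {r \<in> R. r < x}) = x"
proof -
  define xs where "xs = sorted_list_of_set R"
  have sorted: "sorted_wrt (<) xs" unfolding xs_def by (simp add: strict_sorted_list_of_set)
  have "set xs = R" unfolding xs_def using \<open>finite R\<close> by simp
  then obtain p where p: "p < length xs" "xs ! p = x" using \<open>x \<in> R\<close> by (auto simp: in_set_conv_nth)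
  have "{r \<in> R. r < x} = set (take p xs)"
  proof (intro equalityI subsetI)
    fix r assume "r \<in> {r \<in> R. r < x}"
    then obtain q where q: "q < length xs" "xs ! q = r" "r < x"
      using \<open>set xs = R\<close> by (auto simp: in_set_conv_nth)
    then have "\<not> p < q" "p \<noteq> q"
      using sorted_wrt_nth_less[OF sorted, of p q] p by auto
    then have "q < p" by simp
    then show "r \<in> set (take p xs)" using q by (auto simp: in_set_conv_nth)
  next
    fix r assume "r \<in> set (take p xs)"
    then obtain q where "q < p" "xs ! q = r" using p by (auto simp: in_set_conv_nth)
    then show "r \<in> {r \<in> R. r < x}"
      using sorted_wrt_nth_less[OF sorted, of q p] p \<open>set xs = R\<close> by (auto intro: nth_mem)
  qed
  moreover have "card (set (take p xs)) = p"
    using sorted p by (simp add: distinct_card strict_sorted_iff)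
  ultimately show ?thesis using p unfolding enum_def xs_def by simp
qed

text \<open>
  If every row outside \<open>R\<close> repeats its predecessor, then row \<open>i\<close> equals the last row of \<open>R\<close>
  not after \<open>i\<close>, whose position in \<open>R\<close> is \<open>\<phi> i\<close>.
\<close>

lemma kept_rows_stuttering:
  assumes "R \<subseteq> {..<s}" and "0 < s \<Longrightarrow> 0 \<in> R"
    and repeats: "\<forall>i<s. i \<notin> R \<longrightarrow> (\<forall>j<t. W i j = W (i - 1) j)"
  defines "\<phi> \<equiv> \<lambda>i. card {r \<in> R. r \<le> i} - 1"
  shows "stuttering \<phi> s (card R)" and "\<forall>i<s. \<forall>j<t. W i j = W (enum R (\<phi> i)) j"
proof -
  have "finite R" using assms(1) finite_subset by blast
  have nonempty: "0 < card {r \<in> R. r \<le> i}" if "0 < s" for i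
    using assms(2)[OF that] \<open>finite R\<close> by (auto simp: card_gt_0_iff)
  have "card {r \<in> R. r \<le> Suc i} = card {r \<in> R. r \<le> i} + (if Suc i \<in> R then 1 else 0)" for i
  proof -
    have "{r \<in> R. r \<le> Suc i} = (if Suc i \<in> R then insert (Suc i) else id) {r \<in> R. r \<le> i}"
      by (auto simp: le_Suc_eq)
    then show ?thesis using \<open>finite R\<close> by simp
  qed
  then have step: "\<phi> (Suc i) = \<phi> i + (if Suc i \<in> R then 1 else 0)" if "0 < s" for i
    unfolding \<phi>_def using nonempty[OF that, of i] by simp
  have rank: "\<phi> x = card {r \<in> R. r < x}" if "x \<in> R" for x
  proof -
    have "{r \<in> R. r \<le> x} = insert x {r \<in> R. r < x}" using that by auto
    then show ?thesis unfolding \<phi>_def using \<open>finite R\<close> by simp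
  qed
  have "\<phi> 0 = 0" if "0 < s"
    using rank[of 0] assms(2)[OF that] by simp
  moreover have "card R = Suc (\<phi> (s - 1))" if "0 < s"
  proof -
    have "{r \<in> R. r \<le> s - 1} = R" using assms(1) by auto
    then show ?thesis using nonempty[OF that, of "s - 1"] unfolding \<phi>_def by simp
  qed
  ultimately show "stuttering \<phi> s (card R)"
    unfolding stuttering_def using step assms(1) by auto
  show "\<forall>i<s. \<forall>j<t. W i j = W (enum R (\<phi> i)) j"
  proof (intro allI impI)
    fix i j assume "i < s" "j < t"
    then show "W i j = W (enum R (\<phi> i)) j"
    proof (induction i)
      case 0
      then show ?case using rank[of 0] enum_card_less[OF \<open>finite R\<close>, of 0] assms(2) by simp
    next
      case (Suc i)
      show ?case
      proof (cases "Suc i \<in> R")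
        case True
        then show ?thesis using rank enum_card_less[OF \<open>finite R\<close>] by simp
      next
        case False
        then show ?thesis using Suc repeats step by simp
      qed
    qed
  qed
qed

lemma supersaturates_fold_rows:
  "supersaturates (\<lambda>i j. A (enum (fold_rows A s t) i) j) (fold_nrows A s t) t A s t"
proof -
  have "fold_rows A s t \<subseteq> {..<s}" "0 < s \<Longrightarrow> 0 \<in> fold_rows A s t"
    and "\<forall>i<s. i \<notin> fold_rows A s t \<longrightarrow> (\<forall>j<t. A i j = A (i - 1) j)"
    unfolding fold_rows_def by auto
  from kept_rows_stuttering[OF this] show ?thesis
    unfolding fold_nrows_def by (intro supersaturates_stuttering_rows) auto
qed

lemma supersaturates_fold_cols:
  "supersaturates (folding A s t) (fold_nrows A s t) (fold_ncols A s t)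
     (\<lambda>i j. A (enum (fold_rows A s t) i) j) (fold_nrows A s t) t"
proof -
  define R where "R = fold_rows A s t"
  define Q where "Q = fold_cols A s t"
  define C where "C = (\<lambda>i j. A (enum R i) j)"
  have "finite R" unfolding R_def fold_rows_def by simp
  have "Q \<subseteq> {..<t}" "0 < t \<Longrightarrow> 0 \<in> Q"
    and "\<forall>j<t. j \<notin> Q \<longrightarrow> (\<forall>i<card R. C i j = C i (j - 1))"
    using enum_in[OF \<open>finite R\<close>] unfolding Q_def C_def fold_cols_def R_def[symmetric] by auto
  from kept_rows_stuttering[where W = "\<lambda>j i. C i j", OF this] show ?thesis
    unfolding fold_nrows_def fold_ncols_def folding_def C_def R_def Q_def
    by (intro supersaturates_stuttering_cols) auto
qed

lemma supersaturates_polynomial_bound: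
  assumes "supersaturates B s' t' A s t"
  shows "\<exists>p1 p2 :: real poly.
    (\<forall>\<epsilon>::real. \<epsilon> > 0 \<longrightarrow> poly p2 (1 / \<epsilon>) > 0) \<and>
    (\<forall>\<epsilon>::real. \<epsilon> > 0 \<longrightarrow>
      (\<forall>n::nat. real n \<ge> poly p1 (1 / \<epsilon>) \<longrightarrow>
        (\<forall>M. real (num_copies M n B s' t') \<ge> \<epsilon> * real n ^ (s' + t')
           \<longrightarrow> real (num_copies M n A s t) \<ge> (1 / poly p2 (1 / \<epsilon>)) * real n ^ (s + t))))"
proof -
  obtain c K D where "0 < c" "c \<le> 1" "1 \<le> K" "0 \<le> D"
    and H: "\<And>\<epsilon> n M. 0 < \<epsilon> \<Longrightarrow> \<epsilon> \<le> 1 \<Longrightarrow> D * (1 / \<epsilon>) ^ K \<le> real n \<Longrightarrow>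
      \<epsilon> * real n ^ (s' + t') \<le> real (num_copies M n B s' t') \<Longrightarrow>
      c * \<epsilon> ^ K * real n ^ (s + t) \<le> real (num_copies M n A s t)"
    using assms by (rule supersaturatesE) blast
  have "c * \<epsilon> ^ K * real n ^ (s + t) \<le> real (num_copies M n A s t)"
    if "0 < \<epsilon>" and n_large: "D * (1 / \<epsilon>) ^ K + 1 \<le> real n"
      and dense: "\<epsilon> * real n ^ (s' + t') \<le> real (num_copies M n B s' t')" for \<epsilon> n M
  proof (cases "\<epsilon> \<le> 1")
    case True
    then show ?thesis using H[OF \<open>0 < \<epsilon>\<close> True _ dense] n_large by simp
  next
    case False
    \<comment> \<open>the density hypothesis is then impossible: there are at most \<open>n ^ (s' + t')\<close> copies\<close>
    have "0 \<le> D * (1 / \<epsilon>) ^ K" using \<open>0 \<le> D\<close> \<open>0 < \<epsilon>\<close> by simp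
    then have "1 \<le> real n" using n_large by linarith
    then have "real n ^ (s' + t') < \<epsilon> * real n ^ (s' + t')"
      using False by simp
    also have "\<dots> \<le> real (n ^ (s' + t'))"
      using dense num_copies_le[of M n B s' t'] of_nat_mono[where 'a = real] by (meson order_trans)
    finally show ?thesis by simp
  qed
  then show ?thesis
    using \<open>0 < c\<close>
    by (intro exI[of _ "monom D K + 1"] exI[of _ "monom (1 / c) K"])
      (simp add: poly_monom power_one_over)
qed

theorem lemma3p1:
  fixes A :: "nat \<Rightarrow> nat \<Rightarrow> 'a::finite" and s t :: nat
  shows "\<exists>p1 p2 :: real poly.
    (\<forall>\<epsilon>::real. \<epsilon> > 0 \<longrightarrow> poly p2 (1 / \<epsilon>) > 0) \<and>
    (\<forall>\<epsilon>::real. \<epsilon> > 0 \<longrightarrow>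
      (\<forall>n::nat. real n \<ge> poly p1 (1 / \<epsilon>) \<longrightarrow>
        (\<forall>M :: nat \<Rightarrow> nat \<Rightarrow> 'a.
           real (num_copies M n (folding A s t) (fold_nrows A s t) (fold_ncols A s t))
             \<ge> \<epsilon> * real n ^ (fold_nrows A s t + fold_ncols A s t)
           \<longrightarrow> real (num_copies M n A s t)
             \<ge> (1 / poly p2 (1 / \<epsilon>)) * real n ^ (s + t))))"
  using supersaturates_trans[OF supersaturates_fold_cols supersaturates_fold_rows]
  by (rule supersaturates_polynomial_bound)

end
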